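(* Let $n,m\ge1$ and fix parameters $\alpha_k>0$, $v_k\in\mathbb{S}^{n-1}$, $b_k\in\mathbb{R}$, $k=1,\dots,m$. For $K<0$ and $x$ in the relevant model, let $u_k(x)=-\alpha_kB^{v_k}(x)+b_k$. (Poincaré) Fix $x\in\mathbb{R}^n$ (which lies in $\mathbb{P}^n_K$ for $|K|$ small) and let $y=\frac{\omega}{1+\sqrt{1-K\|\omega\|^2}}\in\mathbb{P}^m_K$ with $\omega_k=\frac{\sinh(\sqrt{-K}u_k(x))}{\sqrt{-K}}$. Then as $K\to0^-$, $y_k\to\alpha_k\langle v_k,x\rangle+\tfrac12 b_k$ for each $k$. (Lorentz) Fix $x_s\in\mathbb{R}^n$, let $x=[x_t,x_s^\top]^\top\in\mathbb{L}^n_K$ with $x_t=\sqrt{-1/K+\|x_s\|^2}$, and let $y_s=\frac{1}{\sqrt{-K}}\sinh(\sqrt{-K}\,u(x))$ (entrywise), $y_t=\sqrt{-1/K+\|y_s\|^2}$. Then as $K\to0^-$, $(y_s)_k\to\alpha_k\langle v_k,x_s\rangle+b_k$ for each $k$.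
   Context: $\mathbb{P}^n_K=\{x\in\mathbb{R}^n:\|x\|^2<-1/K\}$ with Busemann function $B^v(x)=\frac{1}{\sqrt{-K}}\log\frac{\|v-\sqrt{-K}x\|^2}{1+K\|x\|^2}$; $\mathbb{L}^n_K=\{x=[x_t,x_s^\top]^\top\in\mathbb{R}^{n+1}:-x_t^2+\|x_s\|^2=1/K,\ x_t>0\}$ with Busemann function $B^v(x)=\frac{1}{\sqrt{-K}}\log(\sqrt{-K}(x_t-\langle x_s,v\rangle))$; $\mathbb{S}^{n-1}$ is the Euclidean unit sphere and $u(x)=(u_1(x),\dots,u_m(x))^\top$. *)

theory Defs
  imports "HOL-Analysis.Analysis"
begin

definition busemann_P :: "real \<Rightarrow> real^'n \<Rightarrow> real^'n \<Rightarrow> real" where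
  "busemann_P K v x =
     (1 / sqrt (-K)) * ln ((norm (v - sqrt (-K) *\<^sub>R x))\<^sup>2 / (1 + K * (norm x)\<^sup>2))"

text \<open>Busemann function of the Lorentz (hyperboloid) model; a point is (x_t, x_s).\<close>
definition busemann_L :: "real \<Rightarrow> real^'n \<Rightarrow> real \<times> (real^'n) \<Rightarrow> real" where
  "busemann_L K v x = (1 / sqrt (-K)) * ln (sqrt (-K) * (fst x - inner (snd x) v))"

definition u_P :: "real \<Rightarrow> ('m \<Rightarrow> real) \<Rightarrow> ('m \<Rightarrow> real^'n) \<Rightarrow> ('m \<Rightarrow> real)
                   \<Rightarrow> real^'n \<Rightarrow> 'm \<Rightarrow> real" where
  "u_P K \<alpha> v b x k = - \<alpha> k * busemann_P K (v k) x + b k"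

definition u_L :: "real \<Rightarrow> ('m \<Rightarrow> real) \<Rightarrow> ('m \<Rightarrow> real^'n) \<Rightarrow> ('m \<Rightarrow> real)
                   \<Rightarrow> real \<times> (real^'n) \<Rightarrow> 'm \<Rightarrow> real" where
  "u_L K \<alpha> v b x k = - \<alpha> k * busemann_L K (v k) x + b k"

definition omega_P :: "real \<Rightarrow> ('m::finite \<Rightarrow> real) \<Rightarrow> ('m \<Rightarrow> real^'n) \<Rightarrow> ('m \<Rightarrow> real)
                   \<Rightarrow> real^'n \<Rightarrow> real^'m" where
  "omega_P K \<alpha> v b x = (\<chi> k. sinh (sqrt (-K) * u_P K \<alpha> v b x k) / sqrt (-K))"

definition y_P :: "real \<Rightarrow> ('m::finite \<Rightarrow> real) \<Rightarrow> ('m \<Rightarrow> real^'n) \<Rightarrow> ('m \<Rightarrow> real)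
                   \<Rightarrow> real^'n \<Rightarrow> real^'m" where
  "y_P K \<alpha> v b x = (1 / (1 + sqrt (1 - K * (norm (omega_P K \<alpha> v b x))\<^sup>2))) *\<^sub>R omega_P K \<alpha> v b x"

definition lift_L :: "real \<Rightarrow> real^'n \<Rightarrow> real \<times> (real^'n)" where
  "lift_L K xs = (sqrt (-1/K + (norm xs)\<^sup>2), xs)"

definition ys_L :: "real \<Rightarrow> ('m::finite \<Rightarrow> real) \<Rightarrow> ('m \<Rightarrow> real^'n) \<Rightarrow> ('m \<Rightarrow> real)
                   \<Rightarrow> real^'n \<Rightarrow> real^'m" where
  "ys_L K \<alpha> v b xs = (\<chi> k. sinh (sqrt (-K) * u_L K \<alpha> v b (lift_L K xs) k) / sqrt (-K))"

end

theory Submission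
  imports Defs
begin

text \<open>Substitute \<open>K = -s\<^sup>2\<close> with \<open>s \<rightarrow> 0\<^sup>+\<close>, so that \<open>sqrt (-K) = s\<close>.
  Then \<open>sqrt (-K) B\<^sup>v(x)\<close> is the logarithm of a smooth function of \<open>s\<close> that equals 1 at
  \<open>s = 0\<close>, so \<open>B\<^sup>v(x)\<close> is a difference quotient and tends to the derivative at 0, namely
  \<open>-2\<langle>v, x\<rangle>\<close> in the Poincare model and \<open>-\<langle>x\<^sub>s, v\<rangle>\<close> in the Lorentz model. Since
  \<open>sinh' 0 = 1\<close>, also \<open>sinh (s u) / s\<close> tends to the limit of \<open>u\<close>, and in the Poincare
  model the normalising factor \<open>1 / (1 + sqrt (1 + s\<^sup>2 \<parallel>\<omega>\<parallel>\<^sup>2))\<close> tends to \<open>1/2\<close>.\<close>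

lemma difference_quotient_tendsto_deriv:
  assumes "(f has_real_derivative D) (at 0)" and "f 0 = 0"
  shows "((\<lambda>s. f s / s) \<longlongrightarrow> D) (at 0)"
  using assms(1) unfolding has_field_derivative_iff by (simp add: assms(2))

lemma difference_quotient_comp_tendsto_at_right:
  assumes "(f has_real_derivative D) (at 0)" and "f 0 = 0"
    and "(u \<longlongrightarrow> u0) (at_right 0)"
  shows "((\<lambda>s. f (s * u s) / s) \<longlongrightarrow> D * u0) (at_right 0)"
proof -
  \<comment> \<open>\<open>s * u s\<close> may vanish, so pass through the continuous extension of \<open>f z / z\<close>.\<close>
  define g where "g z = (if z = 0 then D else f z / z)" for z
  have "(g \<longlongrightarrow> D) (at 0)"
  proof (rule tendsto_cong[THEN iffD1, OF _ difference_quotient_tendsto_deriv[OF assms(1,2)]])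
    show "\<forall>\<^sub>F z in at 0. f z / z = g z"
      unfolding g_def eventually_at by (auto intro: exI[of _ 1])
  qed
  then have "isCont g 0"
    unfolding isCont_def by (simp add: g_def)
  moreover have "((\<lambda>s. s * u s) \<longlongrightarrow> 0) (at_right 0)"
    using tendsto_mult[OF tendsto_ident_at assms(3)] by simp
  ultimately have "((\<lambda>s. g (s * u s)) \<longlongrightarrow> D) (at_right 0)"
    using isCont_tendsto_compose by (fastforce simp: g_def)
  then have "((\<lambda>s. g (s * u s) * u s) \<longlongrightarrow> D * u0) (at_right 0)"
    by (intro tendsto_mult assms(3))
  moreover have "\<forall>\<^sub>F s in at_right 0. g (s * u s) * u s = f (s * u s) / s"
    using eventually_at_right_less[of "0::real"]
    by eventually_elim (auto simp: g_def assms(2))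
  ultimately show ?thesis
    using tendsto_cong by fastforce
qed

lemma tendsto_at_left_0_by_neg_square:
  assumes "((\<lambda>s. F (- s\<^sup>2)) \<longlongrightarrow> L) (at_right 0)"
  shows "(F \<longlongrightarrow> L) (at_left (0::real))"
proof -
  have neg: "\<forall>\<^sub>F K in at_left (0::real). K < 0"
    by (simp add: eventually_at_filter)
  have "((\<lambda>K. sqrt (-K)) \<longlongrightarrow> 0) (at_left (0::real))"
    by (intro tendsto_eq_intros) auto
  moreover have "\<forall>\<^sub>F K in at_left (0::real). sqrt (- K) \<in> {0<..} \<and> sqrt (- K) \<noteq> 0"
    using neg by eventually_elim auto
  ultimately have "filterlim (\<lambda>K. sqrt (-K)) (at_right 0) (at_left (0::real))"
    unfolding filterlim_at by blast
  then have "((\<lambda>K. F (- (sqrt (-K))\<^sup>2)) \<longlongrightarrow> L) (at_left 0)"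
    by (rule filterlim_compose[OF assms])
  moreover have "\<forall>\<^sub>F K in at_left (0::real). F (- (sqrt (-K))\<^sup>2) = F K"
    using neg by eventually_elim auto
  ultimately show ?thesis
    using tendsto_cong by fastforce
qed

lemma sinh_scaled_tendsto_at_right:
  fixes u :: "real \<Rightarrow> real"
  assumes "(u \<longlongrightarrow> u0) (at_right 0)"
  shows "((\<lambda>s. sinh (s * u s) / s) \<longlongrightarrow> u0) (at_right 0)"
proof -
  have "((sinh :: real \<Rightarrow> real) has_real_derivative 1) (at 0)"
    using has_field_derivative_sinh[OF DERIV_ident, of 0] by simp
  then show ?thesis
    using difference_quotient_comp_tendsto_at_right[of sinh 1 u u0] assms by simp
qed

lemma norm_diff_scaleR_unit_sq:
  fixes v x :: "'a::real_inner"
  assumes "norm v = 1"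
  shows "(norm (v - s *\<^sub>R x))\<^sup>2 = 1 - 2 * s * inner v x + s\<^sup>2 * (norm x)\<^sup>2"
proof -
  have "(norm (v - s *\<^sub>R x))\<^sup>2 = inner v v - 2 * s * inner v x + s\<^sup>2 * inner x x"
    unfolding power2_norm_eq_inner
    by (simp add: inner_diff_left inner_diff_right inner_commute algebra_simps power2_eq_square)
  then show ?thesis
    using assms by (simp add: power2_norm_eq_inner[symmetric])
qed

lemma busemann_P_tendsto_at_right:
  fixes v x :: "real^'n"
  assumes "norm v = 1"
  shows "((\<lambda>s. busemann_P (- s\<^sup>2) v x) \<longlongrightarrow> - 2 * inner v x) (at_right 0)"
proof -
  define f where "f s = ln ((1 - 2 * s * inner v x + s\<^sup>2 * (norm x)\<^sup>2) / (1 - s\<^sup>2 * (norm x)\<^sup>2))"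
    for s :: real
  have "(f has_real_derivative - 2 * inner v x) (at 0)"
    unfolding f_def by (auto intro!: derivative_eq_intros)
  then have "((\<lambda>s. f s / s) \<longlongrightarrow> - 2 * inner v x) (at_right 0)"
    using difference_quotient_tendsto_deriv filterlim_at_split by (fastforce simp: f_def)
  moreover have "\<forall>\<^sub>F s in at_right 0. f s / s = busemann_P (- s\<^sup>2) v x"
    using eventually_at_right_less[of "0::real"]
    by eventually_elim (simp add: busemann_P_def norm_diff_scaleR_unit_sq[OF assms] f_def)
  ultimately show ?thesis
    using tendsto_cong by fastforce
qed

lemma busemann_L_lift_tendsto_at_right:
  fixes v xs :: "real^'n"
  shows "((\<lambda>s. busemann_L (- s\<^sup>2) v (lift_L (- s\<^sup>2) xs)) \<longlongrightarrow> - inner xs v) (at_right 0)"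
proof -
  define f where "f s = ln (sqrt (1 + s\<^sup>2 * (norm xs)\<^sup>2) - s * inner xs v)" for s :: real
  have "(f has_real_derivative - inner xs v) (at 0)"
    unfolding f_def by (auto intro!: derivative_eq_intros)
  then have "((\<lambda>s. f s / s) \<longlongrightarrow> - inner xs v) (at_right 0)"
    using difference_quotient_tendsto_deriv filterlim_at_split by (fastforce simp: f_def)
  moreover have "\<forall>\<^sub>F s in at_right 0. f s / s = busemann_L (- s\<^sup>2) v (lift_L (- s\<^sup>2) xs)"
    using eventually_at_right_less[of "0::real"]
  proof eventually_elim
    case (elim s)
    have "sqrt (1 / s\<^sup>2 + (norm xs)\<^sup>2) = sqrt ((1 + s\<^sup>2 * (norm xs)\<^sup>2) / s\<^sup>2)"
      using elim by (simp add: field_simps)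
    then have "s * sqrt (1 / s\<^sup>2 + (norm xs)\<^sup>2) = sqrt (1 + s\<^sup>2 * (norm xs)\<^sup>2)"
      using elim by (simp add: real_sqrt_divide)
    then show ?case
      using elim by (simp add: busemann_L_def lift_L_def f_def right_diff_distrib)
  qed
  ultimately show ?thesis
    using tendsto_cong by fastforce
qed

lemma omega_P_tendsto_at_right:
  assumes "\<And>k. norm (v k) = 1"
  shows "((\<lambda>s. omega_P (- s\<^sup>2) \<alpha> v b x) \<longlongrightarrow> (\<chi> k. 2 * \<alpha> k * inner (v k) x + b k)) (at_right 0)"
  unfolding omega_P_def
proof (intro tendsto_vec_lambda)
  fix k
  have "((\<lambda>s. u_P (- s\<^sup>2) \<alpha> v b x k) \<longlongrightarrow> - \<alpha> k * (- 2 * inner (v k) x) + b k) (at_right 0)"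
    unfolding u_P_def by (intro tendsto_intros busemann_P_tendsto_at_right assms)
  from sinh_scaled_tendsto_at_right[OF this] have "((\<lambda>s. sinh (s * u_P (- s\<^sup>2) \<alpha> v b x k) / s)
      \<longlongrightarrow> 2 * \<alpha> k * inner (v k) x + b k) (at_right 0)"
    by (simp add: mult_ac)
  moreover have "\<forall>\<^sub>F s in at_right 0. sinh (s * u_P (- s\<^sup>2) \<alpha> v b x k) / s =
      sinh (sqrt (- (- s\<^sup>2)) * u_P (- s\<^sup>2) \<alpha> v b x k) / sqrt (- (- s\<^sup>2))"
    using eventually_at_right_less[of "0::real"] by eventually_elim simp
  ultimately show "((\<lambda>s. sinh (sqrt (- (- s\<^sup>2)) * u_P (- s\<^sup>2) \<alpha> v b x k) / sqrt (- (- s\<^sup>2)))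
      \<longlongrightarrow> 2 * \<alpha> k * inner (v k) x + b k) (at_right 0)"
    using tendsto_cong by fastforce
qed

lemma y_P_tendsto_at_left_0:
  assumes "\<And>k. norm (v k) = 1"
  shows "((\<lambda>K. y_P K \<alpha> v b x $ k) \<longlongrightarrow> \<alpha> k * inner (v k) x + b k / 2) (at_left 0)"
proof (rule tendsto_at_left_0_by_neg_square)
  define \<omega>\<^sub>0 where "\<omega>\<^sub>0 = (\<chi> k. 2 * \<alpha> k * inner (v k) x + b k)"
  have "((\<lambda>s. omega_P (- s\<^sup>2) \<alpha> v b x) \<longlongrightarrow> \<omega>\<^sub>0) (at_right 0)"
    unfolding \<omega>\<^sub>0_def by (rule omega_P_tendsto_at_right[OF assms])
  then have "((\<lambda>s. 1 / (1 + sqrt (1 - (- s\<^sup>2) * (norm (omega_P (- s\<^sup>2) \<alpha> v b x))\<^sup>2))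
        * omega_P (- s\<^sup>2) \<alpha> v b x $ k)
      \<longlongrightarrow> 1 / (1 + sqrt (1 - (- 0\<^sup>2) * (norm \<omega>\<^sub>0)\<^sup>2)) * \<omega>\<^sub>0 $ k) (at_right 0)"
    by (intro tendsto_intros) auto
  then show "((\<lambda>s. y_P (- s\<^sup>2) \<alpha> v b x $ k) \<longlongrightarrow> \<alpha> k * inner (v k) x + b k / 2) (at_right 0)"
    by (simp add: y_P_def \<omega>\<^sub>0_def field_simps)
qed

lemma ys_L_tendsto_at_left_0:
  "((\<lambda>K. ys_L K \<alpha> v b xs $ k) \<longlongrightarrow> \<alpha> k * inner (v k) xs + b k) (at_left 0)"
proof (rule tendsto_at_left_0_by_neg_square)
  have "((\<lambda>s. u_L (- s\<^sup>2) \<alpha> v b (lift_L (- s\<^sup>2) xs) k) \<longlongrightarrow> - \<alpha> k * (- inner xs (v k)) + b k)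
      (at_right 0)"
    unfolding u_L_def by (intro tendsto_intros busemann_L_lift_tendsto_at_right)
  from sinh_scaled_tendsto_at_right[OF this] have "((\<lambda>s. sinh (s * u_L (- s\<^sup>2) \<alpha> v b (lift_L (- s\<^sup>2) xs) k) / s)
      \<longlongrightarrow> \<alpha> k * inner (v k) xs + b k) (at_right 0)"
    by (simp add: inner_commute)
  moreover have "\<forall>\<^sub>F s in at_right 0.
      sinh (s * u_L (- s\<^sup>2) \<alpha> v b (lift_L (- s\<^sup>2) xs) k) / s = ys_L (- s\<^sup>2) \<alpha> v b xs $ k"
    using eventually_at_right_less[of "0::real"] by eventually_elim (simp add: ys_L_def)
  ultimately show "((\<lambda>s. ys_L (- s\<^sup>2) \<alpha> v b xs $ k) \<longlongrightarrow> \<alpha> k * inner (v k) xs + b k) (at_right 0)"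
    using tendsto_cong by fastforce
qed

theorem theorem5:
  fixes \<alpha> :: "'m::finite \<Rightarrow> real" and v :: "'m \<Rightarrow> real^'n" and b :: "'m \<Rightarrow> real"
  assumes "\<And>k. \<alpha> k > 0"
    and "\<And>k. norm (v k) = 1"
  shows "(\<forall>(x::real^'n) k. ((\<lambda>K. y_P K \<alpha> v b x $ k) \<longlongrightarrow> \<alpha> k * inner (v k) x + b k / 2) (at_left 0))
       \<and> (\<forall>(xs::real^'n) k. ((\<lambda>K. ys_L K \<alpha> v b xs $ k) \<longlongrightarrow> \<alpha> k * inner (v k) xs + b k) (at_left 0))"
  by (simp add: y_P_tendsto_at_left_0 assms(2) ys_L_tendsto_at_left_0)

end
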